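(* Let $n \ge 1$ and let $p_0, p_1, \ldots, p_n \in \mathbb{Z}^2$ be integer points with $p_n = p_0$, forming the closed polygon $P = (p_0, p_1, \ldots, p_n)$ (not necessarily simple). Then $$\mathrm{Area}(P) = \sum_{q \in \mathbb{Z}^2} \mathrm{Ang}(P - q).$$
   Context: For $u = (u_1,u_2), v = (v_1,v_2) \in \mathbb{R}^2$ define $\mathrm{area}(u,v) := \tfrac12 (u_1 - v_1)(u_2 + v_2)$, and for a polygon $P = (p_0, \ldots, p_n)$ define $\mathrm{Area}(P) := \sum_{i=1}^n \mathrm{area}(p_{i-1}, p_i)$. The euclidean angle measure $\mathrm{ang} \colon \mathbb{R}^2 \times \mathbb{R}^2 \to (-\tfrac12, \tfrac12)$ is defined as follows: if $|u|\,|v| + u \cdot v > 0$ (so $u, v \ne 0$ and $v \notin u\,\mathbb{R}_{<0}$), let $\theta \in (-\pi, \pi)$ be the unique real number with $\frac{v}{|v|} = \begin{pmatrix} \cos\theta & -\sin\theta \\ \sin\theta & \cos\theta \end{pmatrix} \frac{u}{|u|}$ and set $\mathrm{ang}(u,v) := \theta / (2\pi)$; if $|u|\,|v| + u \cdot v = 0$, set $\mathrm{ang}(u,v) := 0$. For a polygon $P = (p_0, \ldots, p_n)$ define $\mathrm{Ang}(P) := \sum_{i=1}^n \mathrm{ang}(p_{i-1}, p_i)$, and for $q \in \mathbb{R}^2$ let $P - q := (p_0 - q, p_1 - q, \ldots, p_n - q)$. (For a closed polygon only finitely many $q \in \mathbb{Z}^2$ have $\mathrm{Ang}(P-q) \neq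 0$, so the sum is a finite sum.) *)

theory Defs
  imports "HOL-Analysis.Analysis"
begin

definition area :: "real \<times> real \<Rightarrow> real \<times> real \<Rightarrow> real" where
  "area u v = (1/2) * (fst u - fst v) * (snd u + snd v)"

definition eucl_len :: "real \<times> real \<Rightarrow> real" where
  "eucl_len u = sqrt ((fst u)\<^sup>2 + (snd u)\<^sup>2)"

definition dotp :: "real \<times> real \<Rightarrow> real \<times> real \<Rightarrow> real" where
  "dotp u v = fst u * fst v + snd u * snd v"

definition ang :: "real \<times> real \<Rightarrow> real \<times> real \<Rightarrow> real" where
  "ang u v =
    (if eucl_len u * eucl_len v + dotp u v > 0 then
       (THE \<theta>. - pi < \<theta> \<and> \<theta> < pi \<and>
          fst v / eucl_len v = cos \<theta> * (fst u / eucl_len u) - sin \<theta> * (snd u / eucl_len u) \<and>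
          snd v / eucl_len v = sin \<theta> * (fst u / eucl_len u) + cos \<theta> * (snd u / eucl_len u)) / (2 * pi)
     else 0)"

text \<open>A polygon (p_0,...,p_n) is given by a function p on indices 0..n.\<close>
definition Area_poly :: "(nat \<Rightarrow> real \<times> real) \<Rightarrow> nat \<Rightarrow> real" where
  "Area_poly p n = (\<Sum>i = 1..n. area (p (i - 1)) (p i))"

definition Ang_poly :: "(nat \<Rightarrow> real \<times> real) \<Rightarrow> nat \<Rightarrow> real" where
  "Ang_poly p n = (\<Sum>i = 1..n. ang (p (i - 1)) (p i))"

definition shift_poly :: "(nat \<Rightarrow> real \<times> real) \<Rightarrow> real \<times> real \<Rightarrow> nat \<Rightarrow> real \<times> real" where
  "shift_poly p q = (\<lambda>i. p i - q)"

definition int_pt :: "int \<times> int \<Rightarrow> real \<times> real" where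
  "int_pt z = (real_of_int (fst z), real_of_int (snd z))"

end

theory Submission
  imports Defs
begin

text \<open>Since area and ang are antisymmetric, fanning the closed polygon from p_0 telescopes both
  sides into sums over the triangles (p_0, p_(i-1), p_i), so it suffices to treat a lattice
  triangle T. The angle sum of T - q vanishes unless q lies in T, since otherwise the three vectors
  lie in an open half-plane; so the lattice sum S(T) of these angle sums is a finite sum. S is
  additive when T is split at a point into three triangles, and vanishes for degenerate T. If T has
  doubled area 1, its only lattice points are its vertices, where the angles of T add up to half a
  turn. Any lattice triangle of doubled area d \<ge> 2 contains a further lattice point splitting it
  into three lattice triangles of doubled area less than d, so induction gives S(T) = Area(T).\<close>

section \<open>Doubled signed area\<close>

definition cross :: "'a::comm_ring \<times> 'a \<Rightarrow> 'a \<times> 'a \<Rightarrow> 'a" where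
  "cross u v = fst u * snd v - snd u * fst v"

lemma cross_cyclic: "cross (c - b) (a - b) = cross (b - a) (c - a)"
  by (simp add: cross_def algebra_simps)

lemma cross_split_at_point:
  "cross (a - x) (b - x) + cross (b - x) (c - x) + cross (c - x) (a - x) = cross (b - a) (c - a)"
  by (simp add: cross_def algebra_simps)

lemma cross_barycentric:
  assumes "q = u *\<^sub>R a + v *\<^sub>R b + w *\<^sub>R c" "u + v + w = 1"
  shows "cross (b - q) (c - q) = u * cross (b - a) (c - a)"
proof -
  have u: "u = 1 - v - w"
    using assms(2) by simp
  show ?thesis
    unfolding assms(1) u by (simp add: cross_def algebra_simps)
qed

section \<open>Angles as complex arguments\<close>

definition complex_of_pair :: "real \<times> real \<Rightarrow> complex" where
  "complex_of_pair u = Complex (fst u) (snd u)"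

lemma complex_of_pair_eq_iff [simp]: "complex_of_pair u = complex_of_pair v \<longleftrightarrow> u = v"
  by (simp add: complex_of_pair_def prod_eq_iff)

lemma complex_of_pair_eq_0_iff [simp]: "complex_of_pair u = 0 \<longleftrightarrow> u = 0"
  by (simp add: complex_of_pair_def complex_eq_iff prod_eq_iff)

lemma complex_of_pair_0 [simp]: "complex_of_pair 0 = 0"
  by simp

lemma complex_of_pair_diff: "complex_of_pair (u - v) = complex_of_pair u - complex_of_pair v"
  by (simp add: complex_of_pair_def complex_eq_iff)

lemma eucl_len_eq_cmod: "eucl_len u = cmod (complex_of_pair u)"
  by (simp add: eucl_len_def complex_of_pair_def cmod_def)

lemma dotp_eq_Re: "dotp u v = Re (complex_of_pair v * cnj (complex_of_pair u))"
  by (simp add: dotp_def complex_of_pair_def)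

lemma inner_eq_Re_complex_of_pair: "e \<bullet> x = Re (complex_of_pair x * cnj (complex_of_pair e))"
  by (simp add: inner_prod_def complex_of_pair_def)

lemma Im_divide_complex_of_pair:
  "Im (complex_of_pair v / complex_of_pair u) = cross u v / (cmod (complex_of_pair u))\<^sup>2"
  by (simp add: Im_divide cross_def complex_of_pair_def cmod_def algebra_simps)

lemma Im_divide_complex_of_pair_pos_iff:
  "0 < Im (complex_of_pair v / complex_of_pair u) \<longleftrightarrow> 0 < cross u v"
  by (cases "u = 0") (simp_all add: Im_divide_complex_of_pair zero_less_divide_iff cross_def)

lemma cmod_add_Re_pos_iff: "0 < cmod z + Re z \<longleftrightarrow> z \<noteq> 0 \<and> Arg z \<noteq> pi"
proof -
  have "\<bar>Re z\<bar> \<le> cmod z"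
    by (rule abs_Re_le_cmod)
  moreover have "cmod z = \<bar>Re z\<bar> \<longleftrightarrow> Im z = 0"
    by (simp add: cmod_def flip: real_sqrt_abs)
  ultimately show ?thesis
    by (auto simp: Arg_eq_pi complex_eq_iff)
qed

text \<open>The value pi is replaced by 0, matching the convention that opposite vectors have angle 0.\<close>
definition Arg_open :: "complex \<Rightarrow> real" where
  "Arg_open z = (if Arg z = pi then 0 else Arg z)"

lemma Arg_open_real: "z \<in> \<real> \<Longrightarrow> Arg_open z = 0"
  by (simp add: Arg_open_def Arg_real)

lemma Arg_open_inverse: "Arg_open (inverse z) = - Arg_open z"
proof (cases "z \<in> \<real>")
  case False
  then have "Arg z \<noteq> pi" and "- pi < Arg z"
    using Arg_bounded by (auto simp: Arg_eq_pi_iff)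
  with False show ?thesis
    by (auto simp: Arg_open_def Arg_inverse)
qed (simp add: Arg_open_real)

lemma rotation_eqs_iff_sgn_eq_cis:
  assumes "u \<noteq> 0" "v \<noteq> 0"
  shows "(fst v / eucl_len v = cos t * (fst u / eucl_len u) - sin t * (snd u / eucl_len u) \<and>
          snd v / eucl_len v = sin t * (fst u / eucl_len u) + cos t * (snd u / eucl_len u))
         \<longleftrightarrow> sgn (complex_of_pair v / complex_of_pair u) = cis t"
proof -
  have sgn_eq: "sgn (complex_of_pair w) = Complex (fst w / eucl_len w) (snd w / eucl_len w)" for w
    by (simp add: complex_eq_iff complex_of_pair_def eucl_len_def cmod_def)
  have "sgn (complex_of_pair u) \<noteq> 0"
    using assms by (simp add: sgn_zero_iff)
  then have "sgn (complex_of_pair v / complex_of_pair u) = cis t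
      \<longleftrightarrow> sgn (complex_of_pair v) = cis t * sgn (complex_of_pair u)"
    by (auto simp: sgn_divide field_simps)
  then show ?thesis
    by (simp add: sgn_eq complex_eq_iff algebra_simps)
qed

lemma ang_eq_Arg_open: "ang u v = Arg_open (complex_of_pair v / complex_of_pair u) / (2 * pi)"
proof (cases "u = 0 \<or> v = 0")
  case True
  then show ?thesis
    by (auto simp: ang_def eucl_len_def dotp_def Arg_open_def Arg_zero)
next
  case False
  then have nonzero: "u \<noteq> 0" "v \<noteq> 0"
    by auto
  define U where "U = complex_of_pair u"
  define z where "z = complex_of_pair v / U"
  have "U \<noteq> 0" "z \<noteq> 0"
    using nonzero by (simp_all add: U_def z_def)
  have "eucl_len u * eucl_len v + dotp u v = cmod U * cmod (z * U) + Re (z * (U * cnj U))"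
    using \<open>U \<noteq> 0\<close> by (simp add: eucl_len_eq_cmod dotp_eq_Re z_def U_def mult.assoc)
  also have "\<dots> = (cmod U)\<^sup>2 * (cmod z + Re z)"
    by (simp add: norm_mult power2_eq_square algebra_simps flip: complex_norm_square)
  finally have cond: "0 < eucl_len u * eucl_len v + dotp u v \<longleftrightarrow> Arg z \<noteq> pi"
    using \<open>U \<noteq> 0\<close> \<open>z \<noteq> 0\<close> by (simp add: zero_less_mult_iff cmod_add_Re_pos_iff)
  show ?thesis
  proof (cases "Arg z = pi")
    case False
    have "(THE t. - pi < t \<and> t < pi \<and>
          fst v / eucl_len v = cos t * (fst u / eucl_len u) - sin t * (snd u / eucl_len u) \<and>
          snd v / eucl_len v = sin t * (fst u / eucl_len u) + cos t * (snd u / eucl_len u)) = Arg z"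
      unfolding rotation_eqs_iff_sgn_eq_cis[OF nonzero] z_def[unfolded U_def, symmetric]
    proof (rule the_equality)
      show "- pi < Arg z \<and> Arg z < pi \<and> sgn z = cis (Arg z)"
        using Arg_correct[OF \<open>z \<noteq> 0\<close>] False by auto
    qed (use cis_Arg_unique in auto)
    with cond False show ?thesis
      by (simp add: ang_def Arg_open_def z_def U_def)
  qed (use cond in \<open>simp add: ang_def Arg_open_def z_def U_def\<close>)
qed

lemma ang_swap: "ang v u = - ang u v"
proof -
  have "complex_of_pair u / complex_of_pair v = inverse (complex_of_pair v / complex_of_pair u)"
    by simp
  then show ?thesis
    unfolding ang_eq_Arg_open by (simp only: Arg_open_inverse)
qed

lemma ang_collinear: "cross u v = 0 \<Longrightarrow> ang u v = 0"
  by (simp add: ang_eq_Arg_open Arg_open_real complex_is_Real_iff Im_divide_complex_of_pair)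

lemma ang_0_left [simp]: "ang 0 v = 0" and ang_0_right [simp]: "ang u 0 = 0"
  by (simp_all add: ang_collinear cross_def)

text \<open>Vectors in an open half-plane have arguments within pi/2 of its normal, so there the angle
  is a difference of arguments and the angles of a cycle cancel.\<close>
lemma ang_cycle_halfplane:
  assumes "0 < e \<bullet> x" "0 < e \<bullet> y" "0 < e \<bullet> w"
  shows "ang x y + ang y w + ang w x = 0"
proof -
  define r where "r x = complex_of_pair x * cnj (complex_of_pair e)" for x
  have ang_r: "ang x y = (Arg (r y) - Arg (r x)) / (2 * pi)" if "0 < e \<bullet> x" "0 < e \<bullet> y" for x y
  proof -
    have pos: "0 < Re (r x)" "0 < Re (r y)"
      using that by (simp_all add: r_def inner_eq_Re_complex_of_pair)
    then have "r x \<noteq> 0" "r y \<noteq> 0" "e \<noteq> 0"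
      by (auto simp: r_def)
    have small: "\<bar>Arg (r x)\<bar> < pi / 2" "\<bar>Arg (r y)\<bar> < pi / 2"
      using pos Arg_Re_pos by blast+
    then have "Arg (r y / r x) = Arg (r y) - Arg (r x)"
      using Arg_divide'[OF \<open>r y \<noteq> 0\<close> \<open>r x \<noteq> 0\<close>] by auto
    moreover have "r y / r x = complex_of_pair y / complex_of_pair x"
      using \<open>e \<noteq> 0\<close> by (simp add: r_def)
    ultimately show ?thesis
      using small by (simp add: ang_eq_Arg_open Arg_open_def)
  qed
  show ?thesis
    using assms by (simp add: ang_r diff_divide_distrib)
qed

lemma cyclic_ratio_product:
  fixes a b c :: "'a::field"
  assumes "a \<noteq> b" "b \<noteq> c" "c \<noteq> a"
  shows "(c - a) / (b - a) * ((a - b) / (c - b)) * ((b - c) / (a - c)) = -1"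
proof -
  have "(b - a) * (c - b) * (a - c) \<noteq> 0"
    using assms by simp
  moreover have "(c - a) * (a - b) * (b - c) = - ((b - a) * (c - b) * (a - c))"
    by (simp add: algebra_simps)
  ultimately show ?thesis
    by (simp only: times_divide_times_eq) simp
qed

text \<open>The three interior angles are arguments in (0, pi) of ratios with product -1, so they add
  up to an odd multiple of pi, which can only be pi.\<close>
lemma ang_triangle_sum:
  assumes "0 < cross (b - a) (c - a)"
  shows "ang (b - a) (c - a) + ang (c - b) (a - b) + ang (a - c) (b - c) = 1 / 2"
proof -
  define A where "A = complex_of_pair (c - a) / complex_of_pair (b - a)"
  define B where "B = complex_of_pair (a - b) / complex_of_pair (c - b)"
  define C where "C = complex_of_pair (b - c) / complex_of_pair (a - c)"
  have "0 < cross (c - b) (a - b)" "0 < cross (a - c) (b - c)"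
    using assms cross_cyclic by metis+
  then have "0 < Im A" "0 < Im B" "0 < Im C"
    using assms by (simp_all add: A_def B_def C_def Im_divide_complex_of_pair_pos_iff)
  then have Args: "0 < Arg A \<and> Arg A < pi" "0 < Arg B \<and> Arg B < pi" "0 < Arg C \<and> Arg C < pi"
    by (simp_all add: Arg_lt_pi)
  have "a \<noteq> b" "b \<noteq> c" "c \<noteq> a"
    using assms by (auto simp: cross_def)
  then have "A * B * C = -1"
    unfolding A_def B_def C_def complex_of_pair_diff by (intro cyclic_ratio_product) auto
  have "A \<noteq> 0" "B \<noteq> 0" "C \<noteq> 0"
    using \<open>0 < Im A\<close> \<open>0 < Im B\<close> \<open>0 < Im C\<close> by auto
  then have "cis (Arg A + Arg B + Arg C) = sgn (A * B * C)"
    by (simp add: cis_Arg sgn_mult flip: cis_mult)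
  also have "\<dots> = -1"
    using \<open>A * B * C = -1\<close> by simp
  finally have "cos (Arg A + Arg B + Arg C) = -1"
    by (simp add: complex_eq_iff)
  then obtain k :: int where k: "Arg A + Arg B + Arg C = (2 * of_int k + 1) * pi"
    using cos_eq_minus1 by blast
  then have "0 < (2 * of_int k + 1) * pi" "(2 * of_int k + 1) * pi < 3 * pi"
    using Args by linarith+
  then have "0 < 2 * real_of_int k + 1" "2 * real_of_int k + 1 < 3"
    by (simp_all add: zero_less_mult_iff)
  then have "k = 0"
    by linarith
  then show ?thesis
    using k Args
    by (simp add: ang_eq_Arg_open Arg_open_def A_def B_def C_def add_divide_distrib[symmetric])
qed

section \<open>Angle sums of triangles\<close>

definition Ang_triangle :: "real \<times> real \<Rightarrow> real \<times> real \<Rightarrow> real \<times> real \<Rightarrow> real \<times> real \<Rightarrow> real" where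
  "Ang_triangle a b c q = ang (a - q) (b - q) + ang (b - q) (c - q) + ang (c - q) (a - q)"

lemma Ang_triangle_outside_hull:
  assumes "q \<notin> convex hull {a, b, c}"
  shows "Ang_triangle a b c q = 0"
proof -
  have "closed (convex hull {a, b, c})"
    by (simp add: compact_imp_closed compact_convex_hull)
  then obtain e t where "e \<bullet> q < t" "\<forall>x \<in> convex hull {a, b, c}. t < e \<bullet> x"
    using separating_hyperplane_closed_point[OF convex_convex_hull _ assms] by blast
  then have "0 < e \<bullet> (x - q)" if "x \<in> {a, b, c}" for x
    using hull_inc[OF that] by (force simp: inner_diff_right)
  then show ?thesis
    unfolding Ang_triangle_def by (intro ang_cycle_halfplane[of e]) auto
qed

lemma Ang_triangle_split:
  "Ang_triangle a b c q = Ang_triangle x a b q + Ang_triangle x b c q + Ang_triangle x c a q"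
  unfolding Ang_triangle_def
  using ang_swap[of "a - q" "x - q"] ang_swap[of "b - q" "x - q"] ang_swap[of "c - q" "x - q"]
  by simp

lemma Ang_triangle_swap: "Ang_triangle a c b q = - Ang_triangle a b c q"
  unfolding Ang_triangle_def
  using ang_swap[of "a - q" "b - q"] ang_swap[of "b - q" "c - q"] ang_swap[of "c - q" "a - q"]
  by simp

lemma Ang_triangle_degenerate:
  assumes "cross (b - a) (c - a) = 0"
  shows "Ang_triangle a b c q = 0"
proof (cases "q \<in> convex hull {a, b, c}")
  case True
  then obtain u v w where "q = u *\<^sub>R a + v *\<^sub>R b + w *\<^sub>R c" "u + v + w = 1"
    unfolding convex_hull_3 by blast
  moreover have "cross (c - b) (a - b) = 0" "cross (a - c) (b - c) = 0"
    using assms cross_cyclic by metis+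
  ultimately have "cross (b - q) (c - q) = 0" "cross (c - q) (a - q) = 0" "cross (a - q) (b - q) = 0"
    using cross_barycentric[of q u a v b w c] cross_barycentric[of q v b w c u a]
      cross_barycentric[of q w c u a v b] assms
    by (simp_all add: ac_simps)
  then show ?thesis
    by (simp add: Ang_triangle_def ang_collinear)
qed (rule Ang_triangle_outside_hull)

section \<open>Lattice triangles\<close>

lemma int_pt_diff: "int_pt (a - b) = int_pt a - int_pt b"
  by (simp add: int_pt_def)

lemma int_pt_eq_iff [simp]: "int_pt a = int_pt b \<longleftrightarrow> a = b"
  by (simp add: int_pt_def prod_eq_iff)

lemma of_int_cross: "real_of_int (cross u v) = cross (int_pt u) (int_pt v)"
  by (simp add: cross_def int_pt_def)

lemma finite_lattice_points_bounded:
  assumes "bounded S"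
  shows "finite {q. int_pt q \<in> S}"
proof -
  obtain r where r: "\<And>x. x \<in> S \<Longrightarrow> norm x \<le> r"
    using assms bounded_iff by blast
  have "{q. int_pt q \<in> S} \<subseteq> {-\<lceil>r\<rceil>..\<lceil>r\<rceil>} \<times> {-\<lceil>r\<rceil>..\<lceil>r\<rceil>}"
  proof safe
    fix i j
    assume "int_pt (i, j) \<in> S"
    then have "norm (real_of_int i, real_of_int j) \<le> r"
      using r by (simp add: int_pt_def)
    then have "\<bar>real_of_int i\<bar> \<le> r" "\<bar>real_of_int j\<bar> \<le> r"
      using norm_fst_le[of "real_of_int i" "real_of_int j"]
        norm_snd_le[of "real_of_int j" "real_of_int i"]
      by simp_all
    then show "i \<in> {-\<lceil>r\<rceil>..\<lceil>r\<rceil>}" "j \<in> {-\<lceil>r\<rceil>..\<lceil>r\<rceil>}"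
      by (metis abs_le_iff atLeastAtMost_iff ceiling_mono ceiling_of_int minus_le_iff of_int_minus)+
  qed
  then show ?thesis
    by (rule finite_subset) simp
qed

definition lattice_sum_Ang_triangle :: "int \<times> int \<Rightarrow> int \<times> int \<Rightarrow> int \<times> int \<Rightarrow> real" where
  "lattice_sum_Ang_triangle a b c = (\<Sum>\<^sub>\<infinity>q. Ang_triangle (int_pt a) (int_pt b) (int_pt c) (int_pt q))"

lemma finite_lattice_support_Ang_triangle:
  "finite {q. Ang_triangle (int_pt a) (int_pt b) (int_pt c) (int_pt q) \<noteq> 0}"
proof (rule finite_subset)
  show "finite {q. int_pt q \<in> convex hull {int_pt a, int_pt b, int_pt c}}"
    by (intro finite_lattice_points_bounded compact_imp_bounded compact_convex_hull) simp
  show "{q. Ang_triangle (int_pt a) (int_pt b) (int_pt c) (int_pt q) \<noteq> 0}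
      \<subseteq> {q. int_pt q \<in> convex hull {int_pt a, int_pt b, int_pt c}}"
    using Ang_triangle_outside_hull by blast
qed

lemma summable_lattice_Ang_triangle:
  "(\<lambda>q. Ang_triangle (int_pt a) (int_pt b) (int_pt c) (int_pt q)) summable_on UNIV"
  by (rule finite_nonzero_values_imp_summable_on) (simp add: finite_lattice_support_Ang_triangle)

lemma lattice_sum_Ang_triangle_split:
  "lattice_sum_Ang_triangle a b c =
    lattice_sum_Ang_triangle x a b + lattice_sum_Ang_triangle x b c + lattice_sum_Ang_triangle x c a"
  unfolding lattice_sum_Ang_triangle_def Ang_triangle_split[of "int_pt a" _ _ _ "int_pt x"]
  by (simp add: infsum_add summable_on_add summable_lattice_Ang_triangle)

lemma lattice_sum_Ang_triangle_swap:
  "lattice_sum_Ang_triangle a c b = - lattice_sum_Ang_triangle a b c"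
  unfolding lattice_sum_Ang_triangle_def Ang_triangle_swap[of "int_pt a" "int_pt c" "int_pt b"]
  by (rule infsum_uminus)

lemma lattice_sum_Ang_triangle_degenerate:
  assumes "cross (b - a) (c - a) = 0"
  shows "lattice_sum_Ang_triangle a b c = 0"
proof -
  have "cross (int_pt b - int_pt a) (int_pt c - int_pt a) = 0"
    using assms of_int_cross[of "b - a" "c - a"] by (simp add: int_pt_diff)
  then show ?thesis
    by (simp add: lattice_sum_Ang_triangle_def Ang_triangle_degenerate)
qed

text \<open>The barycentric coordinates of a lattice point are the doubled areas of the
  subtriangles at it, hence integers when the doubled area is 1.\<close>
lemma lattice_points_unimodular_triangle:
  assumes "cross (b - a) (c - a) = 1" "int_pt q \<in> convex hull {int_pt a, int_pt b, int_pt c}"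
  shows "q \<in> {a, b, c}"
proof -
  obtain u v w where uvw: "0 \<le> u" "0 \<le> v" "0 \<le> w" "u + v + w = 1"
    and q: "int_pt q = u *\<^sub>R int_pt a + v *\<^sub>R int_pt b + w *\<^sub>R int_pt c"
    using assms(2) unfolding convex_hull_3 by blast
  have q': "int_pt q = v *\<^sub>R int_pt b + w *\<^sub>R int_pt c + u *\<^sub>R int_pt a"
    "int_pt q = w *\<^sub>R int_pt c + u *\<^sub>R int_pt a + v *\<^sub>R int_pt b"
    using q by (simp_all add: ac_simps)
  have "v + w + u = 1" "w + u + v = 1"
    using uvw(4) by simp_all
  have "cross (int_pt b - int_pt a) (int_pt c - int_pt a) = 1"
    using assms(1) of_int_cross[of "b - a" "c - a"] by (simp add: int_pt_diff)
  then have unimodular: "cross (int_pt b - int_pt a) (int_pt c - int_pt a) = 1"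
    "cross (int_pt c - int_pt b) (int_pt a - int_pt b) = 1"
    "cross (int_pt a - int_pt c) (int_pt b - int_pt c) = 1"
    by (metis cross_cyclic)+
  have "u = of_int (cross (b - q) (c - q))" "v = of_int (cross (c - q) (a - q))"
    "w = of_int (cross (a - q) (b - q))"
    using cross_barycentric[OF q uvw(4)] cross_barycentric[OF q'(1) \<open>v + w + u = 1\<close>]
      cross_barycentric[OF q'(2) \<open>w + u + v = 1\<close>] unimodular
    by (simp_all add: of_int_cross int_pt_diff)
  then obtain i j k :: int where "u = i" "v = j" "w = k"
    by blast
  with uvw have "(i, j, k) \<in> {(1, 0, 0), (0, 1, 0), (0, 0, 1)}"
    by auto
  then show ?thesis
    using q \<open>u = i\<close> \<open>v = j\<close> \<open>w = k\<close> by auto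
qed

lemma lattice_sum_Ang_triangle_unimodular:
  assumes "cross (b - a) (c - a) = 1"
  shows "lattice_sum_Ang_triangle a b c = 1 / 2"
proof -
  let ?f = "\<lambda>q. Ang_triangle (int_pt a) (int_pt b) (int_pt c) (int_pt q)"
  have "a \<noteq> b" "b \<noteq> c" "c \<noteq> a"
    using assms by (auto simp: cross_def)
  have "?f q = 0" if "q \<notin> {a, b, c}" for q
    using that Ang_triangle_outside_hull lattice_points_unimodular_triangle[OF assms] by blast
  then have "lattice_sum_Ang_triangle a b c = ?f a + ?f b + ?f c"
    unfolding lattice_sum_Ang_triangle_def
    using infsum_cong_neutral[of UNIV "{a, b, c}" ?f ?f] \<open>a \<noteq> b\<close> \<open>b \<noteq> c\<close> \<open>c \<noteq> a\<close>
    by (simp add: add.assoc)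
  also have "\<dots> = ang (int_pt b - int_pt a) (int_pt c - int_pt a)
      + ang (int_pt c - int_pt b) (int_pt a - int_pt b) + ang (int_pt a - int_pt c) (int_pt b - int_pt c)"
    by (simp add: Ang_triangle_def)
  also have "\<dots> = 1 / 2"
    using assms of_int_cross[of "b - a" "c - a"] by (intro ang_triangle_sum) (simp add: int_pt_diff)
  finally show ?thesis .
qed

text \<open>If A is primitive, Bezout gives X0 with cross A X0 = 1 and X is X0 shifted by a multiple
  of A; otherwise X = A / gcd.\<close>
lemma lattice_vector_splitting:
  fixes A B :: "int \<times> int"
  assumes "2 \<le> cross A B"
  obtains X where "0 \<le> cross A X" "cross A X < cross A B" "0 \<le> cross X B" "cross X B < cross A B"
    "0 < cross A X + cross X B" "cross A X + cross X B \<le> cross A B"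
proof (cases "gcd (fst A) (snd A) = 1")
  case True
  then obtain s t where st: "s * fst A + t * snd A = 1"
    using bezout_int[of "fst A" "snd A"] by auto
  define X0 where "X0 = (- t, s)"
  define k where "k = (cross B X0 + cross A B - 1) div cross A B"
  define r where "r = (cross B X0 + cross A B - 1) mod cross A B"
  define X where "X = (fst X0 + k * fst A, snd X0 + k * snd A)"
  have "cross B X0 + cross A B - 1 = k * cross A B + r"
    by (simp only: k_def r_def div_mult_mod_eq)
  moreover have "0 \<le> r" "r < cross A B"
    using assms by (simp_all add: r_def)
  moreover have "cross A X = 1" "cross X B = k * cross A B - cross B X0"
    using st by (simp_all add: X_def X0_def cross_def algebra_simps)
  ultimately show ?thesis
    using assms by (intro that[of X]) auto
next
  case False
  define g where "g = gcd (fst A) (snd A)"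
  have "A \<noteq> 0"
    using assms by (auto simp: cross_def)
  then have "0 < g"
    by (auto simp: g_def prod_eq_iff)
  then have "2 \<le> g"
    using False g_def by linarith
  define X where "X = (fst A div g, snd A div g)"
  have A: "A = (g * fst X, g * snd X)"
    by (simp add: X_def g_def)
  have "cross A X = 0" "cross A B = g * cross X B"
    by (subst A; simp add: cross_def algebra_simps)+
  moreover have "0 < cross X B"
    using assms \<open>2 \<le> g\<close> \<open>cross A B = g * cross X B\<close> zero_less_mult_iff[of g "cross X B"]
    by linarith
  moreover have "2 * cross X B \<le> g * cross X B"
    using \<open>2 \<le> g\<close> \<open>0 < cross X B\<close> by (intro mult_right_mono) auto
  ultimately show ?thesis
    by (intro that[of X]) auto
qed

lemma lattice_triangle_splitting_point:
  fixes a b c :: "int \<times> int"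
  assumes "2 \<le> cross (b - a) (c - a)"
  obtains x where
    "0 \<le> cross (a - x) (b - x)" "cross (a - x) (b - x) < cross (b - a) (c - a)"
    "0 \<le> cross (b - x) (c - x)" "cross (b - x) (c - x) < cross (b - a) (c - a)"
    "0 \<le> cross (c - x) (a - x)" "cross (c - x) (a - x) < cross (b - a) (c - a)"
proof -
  obtain X where X: "0 \<le> cross (b - a) X" "cross (b - a) X < cross (b - a) (c - a)"
    "0 \<le> cross X (c - a)" "cross X (c - a) < cross (b - a) (c - a)"
    "0 < cross (b - a) X + cross X (c - a)" "cross (b - a) X + cross X (c - a) \<le> cross (b - a) (c - a)"
    using lattice_vector_splitting[OF assms] by blast
  have pieces: "cross (a - (a + X)) (b - (a + X)) = cross (b - a) X"
    "cross (b - (a + X)) (c - (a + X)) = cross (b - a) (c - a) - cross (b - a) X - cross X (c - a)"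
    "cross (c - (a + X)) (a - (a + X)) = cross X (c - a)"
    by (simp_all add: cross_def algebra_simps)
  show ?thesis
    using X by (intro that[of "a + X", unfolded pieces]) linarith+
qed

lemma lattice_sum_Ang_triangle_nonneg:
  assumes "0 \<le> cross (b - a) (c - a)"
  shows "lattice_sum_Ang_triangle a b c = of_int (cross (b - a) (c - a)) / 2"
  using assms
proof (induction "nat (cross (b - a) (c - a))" arbitrary: a b c rule: less_induct)
  case less
  consider "cross (b - a) (c - a) = 0" | "cross (b - a) (c - a) = 1" | "2 \<le> cross (b - a) (c - a)"
    using less.prems by linarith
  then show ?case
  proof cases
    case 3
    then obtain x where x:
      "0 \<le> cross (a - x) (b - x)" "cross (a - x) (b - x) < cross (b - a) (c - a)"
      "0 \<le> cross (b - x) (c - x)" "cross (b - x) (c - x) < cross (b - a) (c - a)"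
      "0 \<le> cross (c - x) (a - x)" "cross (c - x) (a - x) < cross (b - a) (c - a)"
      by (rule lattice_triangle_splitting_point)
    have "lattice_sum_Ang_triangle a b c = lattice_sum_Ang_triangle x a b
        + lattice_sum_Ang_triangle x b c + lattice_sum_Ang_triangle x c a"
      by (rule lattice_sum_Ang_triangle_split)
    also have "\<dots> = of_int (cross (a - x) (b - x) + cross (b - x) (c - x) + cross (c - x) (a - x)) / 2"
      using less.hyps[where a = x and b = a and c = b] less.hyps[where a = x and b = b and c = c]
        less.hyps[where a = x and b = c and c = a] x
      by (simp add: add_divide_distrib)
    finally show ?thesis
      by (simp only: cross_split_at_point)
  qed (simp_all add: lattice_sum_Ang_triangle_degenerate lattice_sum_Ang_triangle_unimodular)
qed

lemma lattice_sum_Ang_triangle_eq: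
  "lattice_sum_Ang_triangle a b c = of_int (cross (b - a) (c - a)) / 2"
proof (cases "0 \<le> cross (b - a) (c - a)")
  case False
  have "cross (c - a) (b - a) = - cross (b - a) (c - a)"
    by (simp add: cross_def)
  then show ?thesis
    using lattice_sum_Ang_triangle_nonneg[where b = c and c = b] lattice_sum_Ang_triangle_swap[of a b c]
      False
    by simp
qed (rule lattice_sum_Ang_triangle_nonneg)

section \<open>Closed polygons\<close>

lemma sum_closed_polygon_fan:
  fixes f :: "'a \<Rightarrow> 'a \<Rightarrow> 'b::ab_group_add" and p :: "nat \<Rightarrow> 'a"
  assumes swap: "\<And>u v. f v u = - f u v" and closed: "p n = p 0"
  shows "(\<Sum>i = 1..n. f (p (i - 1)) (p i))
    = (\<Sum>i = 1..n. f (p 0) (p (i - 1)) + f (p (i - 1)) (p i) + f (p i) (p 0))"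
proof -
  have telescope: "(\<Sum>i = 1..m. f (p 0) (p (i - 1)) - f (p 0) (p i)) = f (p 0) (p 0) - f (p 0) (p m)"
    for m
    by (induction m) (simp_all add: sum.cl_ivl_Suc)
  have "(\<Sum>i = 1..n. f (p 0) (p (i - 1)) + f (p (i - 1)) (p i) + f (p i) (p 0))
      = (\<Sum>i = 1..n. f (p (i - 1)) (p i)) + (\<Sum>i = 1..n. f (p 0) (p (i - 1)) - f (p 0) (p i))"
    by (simp add: swap[of "p 0"] sum.distrib[symmetric] algebra_simps)
  then show ?thesis
    using telescope[of n] closed by simp
qed

lemma area_swap: "area v u = - area u v"
  by (simp add: area_def field_simps)

lemma area_triangle: "area a b + area b c + area c a = cross (b - a) (c - a) / 2"
  by (simp add: area_def cross_def field_simps)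

lemma Area_poly_closed_fan:
  "p n = p 0 \<Longrightarrow> Area_poly p n = (\<Sum>i = 1..n. cross (p (i - 1) - p 0) (p i - p 0) / 2)"
  unfolding Area_poly_def area_triangle[symmetric] by (rule sum_closed_polygon_fan) (rule area_swap)

lemma Ang_poly_shift_closed_fan:
  "p n = p 0 \<Longrightarrow> Ang_poly (shift_poly p q) n = (\<Sum>i = 1..n. Ang_triangle (p 0) (p (i - 1)) (p i) q)"
  unfolding Ang_poly_def shift_poly_def Ang_triangle_def
  by (rule sum_closed_polygon_fan) (rule ang_swap)

lemma infsum_sum_finite_support:
  fixes f :: "'i \<Rightarrow> 'a \<Rightarrow> 'b::{topological_comm_monoid_add, t2_space}"
  assumes "finite I" "\<And>i. i \<in> I \<Longrightarrow> finite {x. f i x \<noteq> 0}"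
  shows "(\<Sum>\<^sub>\<infinity>x. \<Sum>i\<in>I. f i x) = (\<Sum>i\<in>I. \<Sum>\<^sub>\<infinity>x. f i x)"
proof -
  define S where "S = (\<Union>i\<in>I. {x. f i x \<noteq> 0})"
  have "finite S"
    using assms by (simp add: S_def)
  have infsum_eq: "infsum g UNIV = sum g S" if "\<And>x. x \<notin> S \<Longrightarrow> g x = 0" for g :: "'a \<Rightarrow> 'b"
    using infsum_cong_neutral[of UNIV S g g] that \<open>finite S\<close> by simp
  have "(\<Sum>\<^sub>\<infinity>x. \<Sum>i\<in>I. f i x) = (\<Sum>x\<in>S. \<Sum>i\<in>I. f i x)"
    by (rule infsum_eq) (auto simp: S_def intro: sum.neutral)
  also have "\<dots> = (\<Sum>i\<in>I. \<Sum>x\<in>S. f i x)"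
    by (rule sum.swap)
  also have "\<dots> = (\<Sum>i\<in>I. \<Sum>\<^sub>\<infinity>x. f i x)"
    by (rule sum.cong[OF refl], rule infsum_eq[symmetric]) (auto simp: S_def)
  finally show ?thesis .
qed

theorem lemma2p5:
  fixes p :: "nat \<Rightarrow> int \<times> int" and n :: nat
  assumes "n \<ge> 1" and "p n = p 0"
  shows "Area_poly (int_pt \<circ> p) n =
         (\<Sum>\<^sub>\<infinity> q :: int \<times> int. Ang_poly (shift_poly (int_pt \<circ> p) (int_pt q)) n)"
proof -
  let ?Ang = "\<lambda>i q. Ang_triangle (int_pt (p 0)) (int_pt (p (i - 1))) (int_pt (p i)) (int_pt q)"
  have "Area_poly (int_pt \<circ> p) n = (\<Sum>i = 1..n. lattice_sum_Ang_triangle (p 0) (p (i - 1)) (p i))"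
    using assms(2)
    by (simp add: Area_poly_closed_fan lattice_sum_Ang_triangle_eq of_int_cross int_pt_diff)
  also have "\<dots> = (\<Sum>\<^sub>\<infinity>q. \<Sum>i = 1..n. ?Ang i q)"
    unfolding lattice_sum_Ang_triangle_def
    by (rule infsum_sum_finite_support[symmetric]) (simp_all add: finite_lattice_support_Ang_triangle)
  also have "\<dots> = (\<Sum>\<^sub>\<infinity>q. Ang_poly (shift_poly (int_pt \<circ> p) (int_pt q)) n)"
    using assms(2) by (simp add: Ang_poly_shift_closed_fan)
  finally show ?thesis .
qed

end
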